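(* For every $k\ge1$ and every $z\in\mathbb{C}P^k\setminus\mathbb{R}P^k$, $$E_{\mathbb{C}P^k}(z)=\log\left(\frac{k+1}{4}\right)+\int_0^\infty e^{-\rho}\log\rho\,d\rho+\log\left(1+\sqrt{1-\|\tau\|^2(z)}\right).$$
   Context: Equip $\mathcal O_{\mathbb{C}P^k}(1)$ with its standard Hermitian metric, so a linear form $\sigma$ has norm $\|\sigma(z)\|=|\sigma(z)|/|z|$, and $\mathcal O(2)$ with the induced metric. The space $\mathbb{R}H^0(\mathbb{C}P^k,\mathcal O(1))$ of real linear forms carries the Euclidean structure with orthonormal basis $\sigma_i(z)=\sqrt{k+1}\,z_i$, $i=0,\dots,k$, and $\mu$ is its Gaussian measure (coefficients $a\in\mathbb{R}^{k+1}$ of $\sum a_i\sigma_i$ have density $\pi^{-(k+1)/2}e^{-|a|^2}$). Define $E_{\mathbb{C}P^k}(z)=\int\log\|\sigma(z)\|^2\,d\mu(\sigma)$. $\tau$ is the section of $\mathcal O(2)$ given by $z_0^2+\dots+z_k^2$, so $\|\tau\|(z)=|z_0^2+\dots+z_k^2|/|z|^2$. *)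

theory Defs
  imports "HOL-Analysis.Analysis"
begin

text \<open>Points of CP^k are represented by nonzero vectors z in C^(k+1), indexed by a
finite type 'n with CARD('n) = k+1.  All quantities below are invariant under
rescaling z, so they are well defined on CP^k.\<close>

definition in_RP :: "complex ^ 'n \<Rightarrow> bool" where
  "in_RP z \<longleftrightarrow> (\<exists>c::complex. \<exists>x::real ^ 'n. z = c *s (\<chi> i. complex_of_real (x $ i)))"

text \<open>Real linear form with coefficients a in the orthonormal basis
sigma_i = sqrt(k+1) z_i, evaluated at z (as a polynomial).\<close>
definition real_section :: "real ^ 'n \<Rightarrow> complex ^ 'n \<Rightarrow> complex" where
  "real_section a z = (\<Sum>i\<in>UNIV. complex_of_real (a $ i * sqrt (real CARD('n))) * z $ i)"

text \<open>Pointwise squared Fubini-Study norm ||sigma(z)||^2 = |sigma(z)|^2/|z|^2.\<close>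
definition section_norm_sq :: "real ^ 'n \<Rightarrow> complex ^ 'n \<Rightarrow> real" where
  "section_norm_sq a z = (cmod (real_section a z))\<^sup>2 / (norm z)\<^sup>2"

definition gauss_measure :: "(real ^ 'n) measure" where
  "gauss_measure = density lborel
     (\<lambda>a. ennreal (pi powr (- real CARD('n) / 2) * exp (- (norm a)\<^sup>2)))"

definition E_CP :: "complex ^ 'n \<Rightarrow> real" where
  "E_CP z = (\<integral>a. ln (section_norm_sq a z) \<partial>(gauss_measure :: (real ^ 'n) measure))"

definition tau_norm :: "complex ^ 'n \<Rightarrow> real" where
  "tau_norm z = cmod (\<Sum>i\<in>UNIV. (z $ i)\<^sup>2) / (norm z)\<^sup>2"

end

theory Submission
  imports Defs "HOL-Probability.Probability"
begin

text \<open>\<open>\<sigma>(z) = \<surd>(k+1) \<Sum> a\<^sub>i z\<^sub>i\<close> is a real Gaussian combination of the coordinates of \<open>z\<close>.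
By rotation invariance of the Gaussian, any real Gaussian combination \<open>\<Sum> a\<^sub>i w\<^sub>i\<close> of complex numbers has the same law as
\<open>s u + t v\<close> for a planar Gaussian \<open>(s, t)\<close> and complex \<open>u, v\<close> with
\<open>|u|\<^sup>2 + |v|\<^sup>2 = \<Sum> |w\<^sub>i|\<^sup>2\<close> and \<open>u\<^sup>2 + v\<^sup>2 = \<Sum> w\<^sub>i\<^sup>2\<close>; Givens rotations achieve this one
coefficient at a time. With \<open>\<zeta> = s + i t\<close> one has \<open>2 (s u + t v) = A \<zeta> + B \<zeta>\<^sup>*\<close> where
\<open>A = u - i v\<close>, \<open>B = u + i v\<close>, so \<open>|A|\<^sup>2 + |B|\<^sup>2 = 2 |z|\<^sup>2\<close> and \<open>A B = \<Sum> z\<^sub>i\<^sup>2\<close>.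
If \<open>|B| < |A|\<close> then \<open>log |A \<zeta> + B \<zeta>\<^sup>*|\<^sup>2 = log |A|\<^sup>2 + log |\<zeta>|\<^sup>2 + 2 Re Log (1 + (B/A) \<zeta>\<^sup>*/\<zeta>)\<close>.
Here \<open>|\<zeta>|\<^sup>2\<close> is exponentially distributed, and expanding the logarithm in powers of
\<open>\<zeta>\<^sup>*/\<zeta>\<close> gives mean zero, again by rotation invariance. Finally
\<open>max (|A|\<^sup>2, |B|\<^sup>2) = |z|\<^sup>2 (1 + \<surd>(1 - \<parallel>\<tau>\<parallel>\<^sup>2))\<close>, and \<open>|A| \<noteq> |B|\<close> exactly when \<open>z\<close> is not real.\<close>

section \<open>The Gaussian on the line and on the plane\<close>

text \<open>The normal law of variance \<open>1/2\<close>: the coefficients of \<^const>\<open>gauss_measure\<close> are independent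
with this law.\<close>
definition gauss_pdf :: "real \<Rightarrow> real" where
  "gauss_pdf x = exp (- x\<^sup>2) / sqrt pi"

definition gauss_line :: "real measure" where
  "gauss_line = density lborel (\<lambda>x. ennreal (gauss_pdf x))"

abbreviation gauss_plane :: "(real \<times> real) measure" where
  "gauss_plane \<equiv> gauss_line \<Otimes>\<^sub>M gauss_line"

lemma gauss_pdf_eq_normal_density: "gauss_pdf = normal_density 0 (sqrt (1/2))"
  by (auto simp: fun_eq_iff gauss_pdf_def normal_density_def real_sqrt_divide power_divide)

lemma gauss_pdf_nonneg [simp]: "0 \<le> gauss_pdf x"
  by (simp add: gauss_pdf_def)

lemma gauss_pdf_measurable [measurable]: "gauss_pdf \<in> borel_measurable borel"
  unfolding gauss_pdf_def by measurable

lemma gauss_pdf_mult: "gauss_pdf x * gauss_pdf y = exp (- (x\<^sup>2 + y\<^sup>2)) / pi"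
  by (simp add: gauss_pdf_def exp_add[symmetric] power2_eq_square)

lemma prob_space_gauss_line: "prob_space gauss_line"
  unfolding gauss_line_def gauss_pdf_eq_normal_density
  by (rule prob_space_normal_density) simp

lemma sets_gauss_line [simp, measurable_cong]: "sets gauss_line = sets borel"
  by (simp add: gauss_line_def)

lemma space_gauss_line [simp]: "space gauss_line = UNIV"
  by (simp add: gauss_line_def)

interpretation gauss_line: prob_space gauss_line
  by (rule prob_space_gauss_line)

interpretation gauss_plane: pair_prob_space gauss_line gauss_line ..

lemma emeasure_gauss_line_UNIV [simp]: "emeasure gauss_line UNIV = 1"
  using gauss_line.emeasure_space_1 by simp

lemma sets_gauss_plane [measurable_cong]: "sets gauss_plane = sets (lborel \<Otimes>\<^sub>M lborel)"
  by (rule sets_pair_measure_cong) auto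

lemma gauss_plane_density:
  "gauss_plane = density (lborel \<Otimes>\<^sub>M lborel) (\<lambda>p. ennreal (gauss_pdf (fst p) * gauss_pdf (snd p)))"
proof -
  have "gauss_plane = density (lborel \<Otimes>\<^sub>M lborel) (\<lambda>(x, y). ennreal (gauss_pdf x) * ennreal (gauss_pdf y))"
    unfolding gauss_line_def
    by (rule pair_measure_density)
      (auto intro: lborel.sigma_finite_measure_axioms prob_space_imp_sigma_finite
        prob_space_gauss_line[unfolded gauss_line_def])
  also have "\<dots> = density (lborel \<Otimes>\<^sub>M lborel) (\<lambda>p. ennreal (gauss_pdf (fst p) * gauss_pdf (snd p)))"
    by (rule density_cong) (auto simp: ennreal_mult split: prod.splits)
  finally show ?thesis .
qed

lemma AE_gauss_plane_nonzero: "AE p in gauss_plane. p \<noteq> (0, 0)"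
proof -
  have "AE p in lborel \<Otimes>\<^sub>M lborel. p \<noteq> ((0, 0) :: real \<times> real)"
    unfolding lborel_prod by (rule AE_lborel_singleton)
  then show ?thesis
    unfolding gauss_plane_density by (subst AE_density) (auto elim: AE_mp)
qed

section \<open>Rotation invariance\<close>

lemma nn_integral_lborel2_shear_fst:
  fixes K :: "real \<times> real \<Rightarrow> ennreal"
  assumes [measurable]: "K \<in> borel_measurable (lborel \<Otimes>\<^sub>M lborel)"
  shows "(\<integral>\<^sup>+p. K (fst p + a * snd p, snd p) \<partial>(lborel \<Otimes>\<^sub>M lborel)) = (\<integral>\<^sup>+p. K p \<partial>(lborel \<Otimes>\<^sub>M lborel))"
proof -
  have "(\<integral>\<^sup>+p. K (fst p + a * snd p, snd p) \<partial>(lborel \<Otimes>\<^sub>M lborel))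
      = (\<integral>\<^sup>+y. \<integral>\<^sup>+x. K (x + a * y, y) \<partial>lborel \<partial>lborel)"
    by (subst lborel_pair.nn_integral_snd[symmetric]) auto
  also have "\<dots> = (\<integral>\<^sup>+y. \<integral>\<^sup>+x. K (x, y) \<partial>lborel \<partial>lborel)"
    using nn_integral_real_affine[of "\<lambda>x. K (x, y)" 1 "a * y" for y] by (simp add: add.commute)
  also have "\<dots> = (\<integral>\<^sup>+p. K p \<partial>(lborel \<Otimes>\<^sub>M lborel))"
    by (subst lborel_pair.nn_integral_snd[symmetric]) auto
  finally show ?thesis .
qed

lemma nn_integral_lborel2_shear_snd:
  fixes K :: "real \<times> real \<Rightarrow> ennreal"
  assumes [measurable]: "K \<in> borel_measurable (lborel \<Otimes>\<^sub>M lborel)"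
  shows "(\<integral>\<^sup>+p. K (fst p, snd p + a * fst p) \<partial>(lborel \<Otimes>\<^sub>M lborel)) = (\<integral>\<^sup>+p. K p \<partial>(lborel \<Otimes>\<^sub>M lborel))"
proof -
  have "(\<integral>\<^sup>+p. K (fst p, snd p + a * fst p) \<partial>(lborel \<Otimes>\<^sub>M lborel))
      = (\<integral>\<^sup>+x. \<integral>\<^sup>+y. K (x, y + a * x) \<partial>lborel \<partial>lborel)"
    by (subst lborel.nn_integral_fst[symmetric]) auto
  also have "\<dots> = (\<integral>\<^sup>+x. \<integral>\<^sup>+y. K (x, y) \<partial>lborel \<partial>lborel)"
    using nn_integral_real_affine[of "\<lambda>y. K (x, y)" 1 "a * x" for x] by (simp add: add.commute)
  also have "\<dots> = (\<integral>\<^sup>+p. K p \<partial>(lborel \<Otimes>\<^sub>M lborel))"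
    by (subst lborel.nn_integral_fst[symmetric]) auto
  finally show ?thesis .
qed

lemma nn_integral_lborel2_squeeze:
  fixes K :: "real \<times> real \<Rightarrow> ennreal"
  assumes [measurable]: "K \<in> borel_measurable (lborel \<Otimes>\<^sub>M lborel)" and c: "c \<noteq> 0"
  shows "(\<integral>\<^sup>+p. K (c * fst p, snd p / c) \<partial>(lborel \<Otimes>\<^sub>M lborel)) = (\<integral>\<^sup>+p. K p \<partial>(lborel \<Otimes>\<^sub>M lborel))"
proof -
  have "(\<integral>\<^sup>+p. K (c * fst p, snd p / c) \<partial>(lborel \<Otimes>\<^sub>M lborel))
      = (\<integral>\<^sup>+x. \<integral>\<^sup>+y. K (c * x, y / c) \<partial>lborel \<partial>lborel)"
    by (subst lborel.nn_integral_fst[symmetric]) auto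
  also have "\<dots> = (\<integral>\<^sup>+x. \<bar>c\<bar> * \<integral>\<^sup>+y. K (c * x, y) \<partial>lborel \<partial>lborel)"
    using nn_integral_real_affine[of "\<lambda>y. K (c * x, y / c)" c 0 for x] c by simp
  also have "\<dots> = \<bar>c\<bar> * (\<integral>\<^sup>+y. \<integral>\<^sup>+x. K (c * x, y) \<partial>lborel \<partial>lborel)"
    by (subst lborel_pair.Fubini') (auto intro: nn_integral_cmult)
  also have "\<dots> = (\<integral>\<^sup>+y. \<bar>c\<bar> * \<integral>\<^sup>+x. K (c * x, y) \<partial>lborel \<partial>lborel)"
    by (rule nn_integral_cmult[symmetric]) measurable
  also have "\<dots> = (\<integral>\<^sup>+y. \<integral>\<^sup>+x. K (x, y) \<partial>lborel \<partial>lborel)"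
    using nn_integral_real_affine[of "\<lambda>x. K (x, y)" c 0 for y] c by simp
  also have "\<dots> = (\<integral>\<^sup>+p. K p \<partial>(lborel \<Otimes>\<^sub>M lborel))"
    by (subst lborel_pair.nn_integral_snd[symmetric]) auto
  finally show ?thesis .
qed

definition rotation :: "real \<Rightarrow> real \<Rightarrow> real \<times> real \<Rightarrow> real \<times> real" where
  "rotation c d p = (c * fst p - d * snd p, d * fst p + c * snd p)"

lemma rotation_measurable [measurable]:
  "rotation c d \<in> (lborel \<Otimes>\<^sub>M lborel) \<rightarrow>\<^sub>M (lborel \<Otimes>\<^sub>M lborel)"
  unfolding rotation_def by measurable

lemma rotation_rotation: "rotation c d (rotation c d p) = rotation (c\<^sup>2 - d\<^sup>2) (2 * c * d) p"
  by (simp add: rotation_def algebra_simps power2_eq_square)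

text \<open>A rotation with \<open>c \<noteq> 0\<close> is a shear, followed by a squeeze, followed by a shear.\<close>
lemma nn_integral_lborel2_rotation_cos_nonzero:
  fixes K :: "real \<times> real \<Rightarrow> ennreal"
  assumes [measurable]: "K \<in> borel_measurable (lborel \<Otimes>\<^sub>M lborel)"
    and cd: "c\<^sup>2 + d\<^sup>2 = 1" and c: "c \<noteq> 0"
  shows "(\<integral>\<^sup>+p. K (rotation c d p) \<partial>(lborel \<Otimes>\<^sub>M lborel)) = (\<integral>\<^sup>+p. K p \<partial>(lborel \<Otimes>\<^sub>M lborel))"
proof -
  define K1 where "K1 = (\<lambda>q. K (fst q, snd q + (d / c) * fst q))"
  define K2 where "K2 = (\<lambda>q. K1 (c * fst q, snd q / c))"
  have [measurable]: "K1 \<in> borel_measurable (lborel \<Otimes>\<^sub>M lborel)" "K2 \<in> borel_measurable (lborel \<Otimes>\<^sub>M lborel)"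
    unfolding K1_def K2_def by measurable
  have "K (rotation c d p) = K2 (fst p + (- d / c) * snd p, snd p)" for p
  proof -
    have "c * (fst p + - d / c * snd p) = c * fst p - d * snd p"
      using c by (simp add: field_simps)
    moreover have "snd p / c + d / c * (c * (fst p + - d / c * snd p)) = d * fst p + c * snd p"
    proof -
      have "snd p / c + d / c * (c * (fst p + - d / c * snd p)) = d * fst p + (1 - d\<^sup>2) / c * snd p"
        using c by (simp add: field_simps power2_eq_square)
      also have "(1 - d\<^sup>2) / c = c"
        using c cd by (simp add: field_simps power2_eq_square)
      finally show ?thesis by simp
    qed
    ultimately show ?thesis unfolding K2_def K1_def rotation_def by simp
  qed
  then have "(\<integral>\<^sup>+p. K (rotation c d p) \<partial>(lborel \<Otimes>\<^sub>M lborel))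
      = (\<integral>\<^sup>+p. K2 (fst p + (- d / c) * snd p, snd p) \<partial>(lborel \<Otimes>\<^sub>M lborel))"
    by simp
  also have "\<dots> = (\<integral>\<^sup>+p. K2 p \<partial>(lborel \<Otimes>\<^sub>M lborel))"
    by (rule nn_integral_lborel2_shear_fst) measurable
  also have "\<dots> = (\<integral>\<^sup>+p. K1 p \<partial>(lborel \<Otimes>\<^sub>M lborel))"
    unfolding K2_def by (rule nn_integral_lborel2_squeeze) (use c in auto)
  also have "\<dots> = (\<integral>\<^sup>+p. K p \<partial>(lborel \<Otimes>\<^sub>M lborel))"
    unfolding K1_def by (rule nn_integral_lborel2_shear_snd) measurable
  finally show ?thesis .
qed

text \<open>The quarter turns \<open>c = 0\<close> are squares of eighth turns.\<close>
lemma nn_integral_lborel2_rotation: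
  fixes K :: "real \<times> real \<Rightarrow> ennreal"
  assumes K [measurable]: "K \<in> borel_measurable (lborel \<Otimes>\<^sub>M lborel)" and cd: "c\<^sup>2 + d\<^sup>2 = 1"
  shows "(\<integral>\<^sup>+p. K (rotation c d p) \<partial>(lborel \<Otimes>\<^sub>M lborel)) = (\<integral>\<^sup>+p. K p \<partial>(lborel \<Otimes>\<^sub>M lborel))"
proof (cases "c = 0")
  case False
  then show ?thesis using nn_integral_lborel2_rotation_cos_nonzero[OF K cd] by simp
next
  case True
  then have d2: "d\<^sup>2 = 1" using cd by simp
  define c' where "c' = 1 / sqrt 2"
  define d' where "d' = d / sqrt 2"
  have c': "c' \<noteq> 0" and cd': "c'\<^sup>2 + d'\<^sup>2 = 1"
    using d2 by (auto simp: c'_def d'_def power_divide)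
  have "rotation c d p = rotation c' d' (rotation c' d' p)" for p
    unfolding rotation_rotation using d2 True by (simp add: c'_def d'_def power_divide)
  then have "(\<integral>\<^sup>+p. K (rotation c d p) \<partial>(lborel \<Otimes>\<^sub>M lborel))
      = (\<integral>\<^sup>+p. (\<lambda>q. K (rotation c' d' q)) (rotation c' d' p) \<partial>(lborel \<Otimes>\<^sub>M lborel))"
    by simp
  also have "\<dots> = (\<integral>\<^sup>+p. K (rotation c' d' p) \<partial>(lborel \<Otimes>\<^sub>M lborel))"
    by (rule nn_integral_lborel2_rotation_cos_nonzero[OF _ cd' c']) measurable
  also have "\<dots> = (\<integral>\<^sup>+p. K p \<partial>(lborel \<Otimes>\<^sub>M lborel))"
    by (rule nn_integral_lborel2_rotation_cos_nonzero[OF K cd' c'])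
  finally show ?thesis .
qed

lemma gauss_pdf_rotation:
  assumes "c\<^sup>2 + d\<^sup>2 = 1"
  shows "gauss_pdf (fst (rotation c d p)) * gauss_pdf (snd (rotation c d p)) = gauss_pdf (fst p) * gauss_pdf (snd p)"
proof -
  have "(c * fst p - d * snd p)\<^sup>2 + (d * fst p + c * snd p)\<^sup>2 = (c\<^sup>2 + d\<^sup>2) * ((fst p)\<^sup>2 + (snd p)\<^sup>2)"
    by (simp add: algebra_simps power2_eq_square)
  then show ?thesis using assms by (simp add: gauss_pdf_mult rotation_def)
qed

lemma nn_integral_gauss_plane_rotation:
  fixes F :: "real \<times> real \<Rightarrow> ennreal"
  assumes [measurable]: "F \<in> borel_measurable (lborel \<Otimes>\<^sub>M lborel)" and cd: "c\<^sup>2 + d\<^sup>2 = 1"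
  shows "(\<integral>\<^sup>+p. F (rotation c d p) \<partial>gauss_plane) = (\<integral>\<^sup>+p. F p \<partial>gauss_plane)"
proof -
  define K where "K = (\<lambda>p. ennreal (gauss_pdf (fst p) * gauss_pdf (snd p)) * F p)"
  have [measurable]: "K \<in> borel_measurable (lborel \<Otimes>\<^sub>M lborel)"
    unfolding K_def by measurable
  have "(\<integral>\<^sup>+p. F (rotation c d p) \<partial>gauss_plane) = (\<integral>\<^sup>+p. K (rotation c d p) \<partial>(lborel \<Otimes>\<^sub>M lborel))"
    unfolding gauss_plane_density K_def using cd
    by (subst nn_integral_density) (auto simp: gauss_pdf_rotation)
  also have "\<dots> = (\<integral>\<^sup>+p. K p \<partial>(lborel \<Otimes>\<^sub>M lborel))"
    by (rule nn_integral_lborel2_rotation) (use cd in auto)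
  also have "\<dots> = (\<integral>\<^sup>+p. F p \<partial>gauss_plane)"
    unfolding gauss_plane_density K_def by (subst nn_integral_density) auto
  finally show ?thesis .
qed

lemma distr_eqI_nn_integral:
  assumes X [measurable]: "X \<in> M \<rightarrow>\<^sub>M N" and Y [measurable]: "Y \<in> M' \<rightarrow>\<^sub>M N"
    and eq: "\<And>F. F \<in> borel_measurable N \<Longrightarrow> (\<integral>\<^sup>+x. F (X x) \<partial>M) = (\<integral>\<^sup>+y. F (Y y) \<partial>M')"
  shows "distr M N X = distr M' N Y"
proof (rule measure_eqI)
  show "sets (distr M N X) = sets (distr M' N Y)" by simp
  fix A assume "A \<in> sets (distr M N X)"
  then have A [measurable]: "A \<in> sets N" by simp
  have "emeasure (distr M N X) A = (\<integral>\<^sup>+x. indicator A x \<partial>distr M N X)" by simp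
  also have "\<dots> = (\<integral>\<^sup>+x. indicator A (X x) \<partial>M)" by (rule nn_integral_distr) measurable
  also have "\<dots> = (\<integral>\<^sup>+y. indicator A (Y y) \<partial>M')" by (rule eq) measurable
  also have "\<dots> = (\<integral>\<^sup>+x. indicator A x \<partial>distr M' N Y)" by (rule nn_integral_distr[symmetric]) measurable
  also have "\<dots> = emeasure (distr M' N Y) A" by simp
  finally show "emeasure (distr M N X) A = emeasure (distr M' N Y) A" .
qed

lemma distr_gauss_plane_rotation:
  assumes "c\<^sup>2 + d\<^sup>2 = 1"
  shows "distr gauss_plane gauss_plane (rotation c d) = gauss_plane"
proof -
  have "distr gauss_plane gauss_plane (rotation c d) = distr gauss_plane gauss_plane (\<lambda>p. p)"
    by (rule distr_eqI_nn_integral)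
      (auto simp: measurable_cong_sets[OF sets_gauss_plane sets_gauss_plane]
        intro: nn_integral_gauss_plane_rotation[OF _ assms])
  then show ?thesis by (simp add: distr_id)
qed

lemma integral_gauss_plane_rotation:
  fixes g :: "real \<times> real \<Rightarrow> 'b::{banach, second_countable_topology}"
  assumes [measurable]: "g \<in> borel_measurable gauss_plane" and "c\<^sup>2 + d\<^sup>2 = 1"
  shows "(\<integral>p. g (rotation c d p) \<partial>gauss_plane) = (\<integral>p. g p \<partial>gauss_plane)"
proof -
  have "(\<integral>p. g p \<partial>gauss_plane) = (\<integral>p. g p \<partial>distr gauss_plane gauss_plane (rotation c d))"
    by (simp add: distr_gauss_plane_rotation[OF assms(2)])
  also have "\<dots> = (\<integral>p. g (rotation c d p) \<partial>gauss_plane)"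
    by (rule integral_distr) (auto simp: sets_gauss_plane)
  finally show ?thesis by simp
qed

section \<open>Gaussian combinations of complex numbers\<close>

definition lincomb2 :: "complex \<Rightarrow> complex \<Rightarrow> real \<times> real \<Rightarrow> complex" where
  "lincomb2 u v p = of_real (fst p) * u + of_real (snd p) * v"

lemma lincomb2_measurable [measurable]: "lincomb2 u v \<in> borel_measurable (lborel \<Otimes>\<^sub>M lborel)"
  unfolding lincomb2_def by measurable

lemma lincomb2_measurable_gauss_plane [measurable]: "lincomb2 u v \<in> borel_measurable gauss_plane"
  using lincomb2_measurable by (simp add: measurable_cong_sets[OF sets_gauss_plane refl])

lemma lincomb2_rotation:
  "lincomb2 u v (rotation c d p) = lincomb2 (of_real c * u + of_real d * v) (- of_real d * u + of_real c * v) p"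
  by (simp add: lincomb2_def rotation_def algebra_simps)

lemma nn_integral_gauss_plane_lincomb2_rotation:
  fixes F :: "complex \<Rightarrow> ennreal"
  assumes [measurable]: "F \<in> borel_measurable borel" and cd: "c\<^sup>2 + d\<^sup>2 = 1"
  shows "(\<integral>\<^sup>+p. F (lincomb2 (of_real c * u + of_real d * v) (- of_real d * u + of_real c * v) p) \<partial>gauss_plane)
       = (\<integral>\<^sup>+p. F (lincomb2 u v p) \<partial>gauss_plane)"
  using nn_integral_gauss_plane_rotation[of "\<lambda>p. F (lincomb2 u v p)", OF _ cd]
  by (simp add: lincomb2_rotation)

lemma rotation_sum_cmod_sq:
  fixes u v :: complex
  assumes "c\<^sup>2 + d\<^sup>2 = 1"
  shows "(cmod (of_real c * u + of_real d * v))\<^sup>2 + (cmod (- of_real d * u + of_real c * v))\<^sup>2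
       = (cmod u)\<^sup>2 + (cmod v)\<^sup>2"
proof -
  have "(cmod (of_real c * u + of_real d * v))\<^sup>2 + (cmod (- of_real d * u + of_real c * v))\<^sup>2
      = (c\<^sup>2 + d\<^sup>2) * ((Re u)\<^sup>2 + (Im u)\<^sup>2 + (Re v)\<^sup>2 + (Im v)\<^sup>2)"
    unfolding cmod_power2 by (simp add: algebra_simps power2_eq_square)
  then show ?thesis using assms by (simp add: cmod_power2)
qed

lemma rotation_sum_sq:
  fixes u v :: complex
  assumes "c\<^sup>2 + d\<^sup>2 = 1"
  shows "(of_real c * u + of_real d * v)\<^sup>2 + (- of_real d * u + of_real c * v)\<^sup>2 = u\<^sup>2 + v\<^sup>2"
proof -
  have "(of_real c * u + of_real d * v)\<^sup>2 + (- of_real d * u + of_real c * v)\<^sup>2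
      = of_real (c\<^sup>2 + d\<^sup>2) * (u\<^sup>2 + v\<^sup>2)"
    by (simp add: algebra_simps power2_eq_square)
  then show ?thesis using assms by simp
qed

lemma exists_rotation_annihilating: "\<exists>c d::real. c\<^sup>2 + d\<^sup>2 = 1 \<and> - d * a + c * b = 0"
proof (cases "a = 0 \<and> b = 0")
  case True
  then show ?thesis by (intro exI[of _ 1] exI[of _ 0]) auto
next
  case False
  define r where "r = sqrt (a\<^sup>2 + b\<^sup>2)"
  have "a\<^sup>2 + b\<^sup>2 > 0" using False by (simp add: sum_power2_gt_zero_iff)
  then have "r > 0" "r\<^sup>2 = a\<^sup>2 + b\<^sup>2" by (auto simp: r_def)
  then have "(a / r)\<^sup>2 + (b / r)\<^sup>2 = 1" "- (b / r) * a + (a / r) * b = 0"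
    using False by (simp_all add: power_divide add_divide_distrib[symmetric] field_simps)
  then show ?thesis by blast
qed

definition expect_lincomb3 :: "complex \<Rightarrow> complex \<Rightarrow> complex \<Rightarrow> (complex \<Rightarrow> ennreal) \<Rightarrow> ennreal" where
  "expect_lincomb3 u v w F = (\<integral>\<^sup>+p. (\<integral>\<^sup>+r. F (lincomb2 u v p + of_real r * w) \<partial>gauss_line) \<partial>gauss_plane)"

lemma expect_lincomb3_rotation_uv:
  fixes F :: "complex \<Rightarrow> ennreal"
  assumes [measurable]: "F \<in> borel_measurable borel" and cd: "c\<^sup>2 + d\<^sup>2 = 1"
  shows "expect_lincomb3 (of_real c * u + of_real d * v) (- of_real d * u + of_real c * v) w F
       = expect_lincomb3 u v w F"
  unfolding expect_lincomb3_def
  by (rule nn_integral_gauss_plane_lincomb2_rotation[OF _ cd,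
        where F = "\<lambda>x. \<integral>\<^sup>+r. F (x + of_real r * w) \<partial>gauss_line"]) measurable

lemma expect_lincomb3_regroup:
  fixes F :: "complex \<Rightarrow> ennreal"
  assumes [measurable]: "F \<in> borel_measurable borel"
  shows "expect_lincomb3 u v w F = (\<integral>\<^sup>+s. (\<integral>\<^sup>+q. F (of_real s * u + lincomb2 v w q) \<partial>gauss_plane) \<partial>gauss_line)"
proof -
  have "expect_lincomb3 u v w F
      = (\<integral>\<^sup>+s. \<integral>\<^sup>+t. (\<integral>\<^sup>+r. F (of_real s * u + of_real t * v + of_real r * w) \<partial>gauss_line) \<partial>gauss_line \<partial>gauss_line)"
    unfolding expect_lincomb3_def lincomb2_def by (subst gauss_line.nn_integral_fst[symmetric]) auto
  also have "\<dots> = (\<integral>\<^sup>+s. (\<integral>\<^sup>+q. F (of_real s * u + lincomb2 v w q) \<partial>gauss_plane) \<partial>gauss_line)"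
    unfolding lincomb2_def
    by (intro nn_integral_cong, subst gauss_line.nn_integral_fst[symmetric]) (auto simp: add.assoc)
  finally show ?thesis .
qed

lemma expect_lincomb3_rotation_vw:
  fixes F :: "complex \<Rightarrow> ennreal"
  assumes F [measurable]: "F \<in> borel_measurable borel" and cd: "c\<^sup>2 + d\<^sup>2 = 1"
  shows "expect_lincomb3 u (of_real c * v + of_real d * w) (- of_real d * v + of_real c * w) F
       = expect_lincomb3 u v w F"
  unfolding expect_lincomb3_regroup[OF F]
  by (rule nn_integral_cong,
      rule nn_integral_gauss_plane_lincomb2_rotation[OF _ cd, where F = "\<lambda>x. F (of_real s * u + x)" for s])
    measurable

text \<open>Three Givens rotations make the third coefficient vanish: the first two make the real parts
of the second and third coefficients vanish, the last one then kills the third.\<close>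
lemma expect_lincomb3_eq_lincomb2:
  obtains u' v' where
    "\<And>F. F \<in> borel_measurable borel \<Longrightarrow> expect_lincomb3 u v w F = (\<integral>\<^sup>+p. F (lincomb2 u' v' p) \<partial>gauss_plane)"
    "(cmod u')\<^sup>2 + (cmod v')\<^sup>2 = (cmod u)\<^sup>2 + (cmod v)\<^sup>2 + (cmod w)\<^sup>2"
    "u'\<^sup>2 + v'\<^sup>2 = u\<^sup>2 + v\<^sup>2 + w\<^sup>2"
proof -
  obtain c1 d1 where cd1: "c1\<^sup>2 + d1\<^sup>2 = 1" and e1: "- d1 * Re v + c1 * Re w = 0"
    using exists_rotation_annihilating by blast
  define v1 where "v1 = of_real c1 * v + of_real d1 * w"
  define w1 where "w1 = - of_real d1 * v + of_real c1 * w"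
  obtain c2 d2 where cd2: "c2\<^sup>2 + d2\<^sup>2 = 1" and e2: "- d2 * Re u + c2 * Re v1 = 0"
    using exists_rotation_annihilating by blast
  define u2 where "u2 = of_real c2 * u + of_real d2 * v1"
  define v2 where "v2 = - of_real d2 * u + of_real c2 * v1"
  obtain c3 d3 where cd3: "c3\<^sup>2 + d3\<^sup>2 = 1" and e3: "- d3 * Im v2 + c3 * Im w1 = 0"
    using exists_rotation_annihilating by blast
  define v3 where "v3 = of_real c3 * v2 + of_real d3 * w1"
  define w3 where "w3 = - of_real d3 * v2 + of_real c3 * w1"
  have "Re w1 = 0" "Re v2 = 0" using e1 e2 by (simp_all add: w1_def v2_def)
  then have w3: "w3 = 0" using e3 by (simp add: w3_def complex_eq_iff)
  show thesis
  proof
    fix F :: "complex \<Rightarrow> ennreal" assume F [measurable]: "F \<in> borel_measurable borel"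
    have "expect_lincomb3 u v w F = expect_lincomb3 u v1 w1 F"
      unfolding v1_def w1_def by (rule expect_lincomb3_rotation_vw[OF F cd1, symmetric])
    also have "\<dots> = expect_lincomb3 u2 v2 w1 F"
      unfolding u2_def v2_def by (rule expect_lincomb3_rotation_uv[OF F cd2, symmetric])
    also have "\<dots> = expect_lincomb3 u2 v3 w3 F"
      unfolding v3_def w3_def by (rule expect_lincomb3_rotation_vw[OF F cd3, symmetric])
    finally show "expect_lincomb3 u v w F = (\<integral>\<^sup>+p. F (lincomb2 u2 v3 p) \<partial>gauss_plane)"
      by (simp add: w3 expect_lincomb3_def)
  next
    have "(cmod v1)\<^sup>2 + (cmod w1)\<^sup>2 = (cmod v)\<^sup>2 + (cmod w)\<^sup>2"
      "(cmod u2)\<^sup>2 + (cmod v2)\<^sup>2 = (cmod u)\<^sup>2 + (cmod v1)\<^sup>2"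
      "(cmod v3)\<^sup>2 + (cmod w3)\<^sup>2 = (cmod v2)\<^sup>2 + (cmod w1)\<^sup>2"
      unfolding v1_def w1_def u2_def v2_def v3_def w3_def
      by (rule rotation_sum_cmod_sq[OF cd1], rule rotation_sum_cmod_sq[OF cd2], rule rotation_sum_cmod_sq[OF cd3])
    then show "(cmod u2)\<^sup>2 + (cmod v3)\<^sup>2 = (cmod u)\<^sup>2 + (cmod v)\<^sup>2 + (cmod w)\<^sup>2"
      using w3 by simp
  next
    have "v1\<^sup>2 + w1\<^sup>2 = v\<^sup>2 + w\<^sup>2" "u2\<^sup>2 + v2\<^sup>2 = u\<^sup>2 + v1\<^sup>2" "v3\<^sup>2 + w3\<^sup>2 = v2\<^sup>2 + w1\<^sup>2"
      unfolding v1_def w1_def u2_def v2_def v3_def w3_def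
      by (rule rotation_sum_sq[OF cd1], rule rotation_sum_sq[OF cd2], rule rotation_sum_sq[OF cd3])
    then show "u2\<^sup>2 + v3\<^sup>2 = u\<^sup>2 + v\<^sup>2 + w\<^sup>2"
      using w3 by (simp add: algebra_simps) (metis add.commute add.left_commute)
  qed
qed

lemma nn_integral_PiM_insert_sum:
  fixes w :: "'i \<Rightarrow> complex" and F :: "complex \<Rightarrow> ennreal"
  assumes I: "finite I" "j \<notin> I" and [measurable]: "F \<in> borel_measurable borel"
  shows "(\<integral>\<^sup>+x. F (\<Sum>i\<in>insert j I. of_real (x i) * w i) \<partial>PiM (insert j I) (\<lambda>_. gauss_line))
       = (\<integral>\<^sup>+x. (\<integral>\<^sup>+y. F ((\<Sum>i\<in>I. of_real (x i) * w i) + of_real y * w j) \<partial>gauss_line)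
            \<partial>PiM I (\<lambda>_. gauss_line))"
proof -
  interpret product_prob_space "\<lambda>_::'i. gauss_line" by unfold_locales
  have "(\<Sum>i\<in>insert j I. of_real ((x(j := y)) i) * w i) = (\<Sum>i\<in>I. of_real (x i) * w i) + of_real y * w j"
    for x :: "'i \<Rightarrow> real" and y
  proof -
    have "(\<Sum>i\<in>I. of_real ((x(j := y)) i) * w i) = (\<Sum>i\<in>I. of_real (x i) * w i)"
      using I by (intro sum.cong) auto
    then show ?thesis using I by (simp add: add.commute)
  qed
  moreover have "(\<integral>\<^sup>+x. F (\<Sum>i\<in>insert j I. of_real (x i) * w i) \<partial>PiM (insert j I) (\<lambda>_. gauss_line))
      = (\<integral>\<^sup>+x. (\<integral>\<^sup>+y. F (\<Sum>i\<in>insert j I. of_real ((x(j := y)) i) * w i) \<partial>gauss_line) \<partial>PiM I (\<lambda>_. gauss_line))"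
    by (rule product_nn_integral_insert) (use I in auto)
  ultimately show ?thesis by simp
qed

lemma gauss_lincomb_reduce_to_plane:
  fixes w :: "'i \<Rightarrow> complex"
  assumes "finite I"
  shows "\<exists>u v. (\<forall>F \<in> borel_measurable borel.
      (\<integral>\<^sup>+x. F (\<Sum>i\<in>I. of_real (x i) * w i) \<partial>PiM I (\<lambda>_. gauss_line))
        = (\<integral>\<^sup>+p. F (lincomb2 u v p) \<partial>gauss_plane))
    \<and> (cmod u)\<^sup>2 + (cmod v)\<^sup>2 = (\<Sum>i\<in>I. (cmod (w i))\<^sup>2)
    \<and> u\<^sup>2 + v\<^sup>2 = (\<Sum>i\<in>I. (w i)\<^sup>2)"
  using assms
proof (induction I rule: finite_induct)
  case empty
  show ?case
    by (intro exI[of _ 0]) (simp add: lincomb2_def PiM_empty gauss_plane.emeasure_space_1)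
next
  case (insert j I)
  then obtain u v where
    IH: "\<And>F. F \<in> borel_measurable borel \<Longrightarrow> (\<integral>\<^sup>+x. F (\<Sum>i\<in>I. of_real (x i) * w i) \<partial>PiM I (\<lambda>_. gauss_line))
           = (\<integral>\<^sup>+p. F (lincomb2 u v p) \<partial>gauss_plane)"
    and norms: "(cmod u)\<^sup>2 + (cmod v)\<^sup>2 = (\<Sum>i\<in>I. (cmod (w i))\<^sup>2)"
    and squares: "u\<^sup>2 + v\<^sup>2 = (\<Sum>i\<in>I. (w i)\<^sup>2)"
    by blast
  obtain u' v' where
    reduce: "\<And>F. F \<in> borel_measurable borel \<Longrightarrow> expect_lincomb3 u v (w j) F = (\<integral>\<^sup>+p. F (lincomb2 u' v' p) \<partial>gauss_plane)"
    and "(cmod u')\<^sup>2 + (cmod v')\<^sup>2 = (cmod u)\<^sup>2 + (cmod v)\<^sup>2 + (cmod (w j))\<^sup>2"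
    and "u'\<^sup>2 + v'\<^sup>2 = u\<^sup>2 + v\<^sup>2 + (w j)\<^sup>2"
    using expect_lincomb3_eq_lincomb2[of u v "w j"] by blast
  moreover have "(\<integral>\<^sup>+x. F (\<Sum>i\<in>insert j I. of_real (x i) * w i) \<partial>PiM (insert j I) (\<lambda>_. gauss_line))
      = (\<integral>\<^sup>+p. F (lincomb2 u' v' p) \<partial>gauss_plane)"
    if F [measurable]: "F \<in> borel_measurable borel" for F
  proof -
    have "(\<integral>\<^sup>+x. F (\<Sum>i\<in>insert j I. of_real (x i) * w i) \<partial>PiM (insert j I) (\<lambda>_. gauss_line))
        = (\<integral>\<^sup>+x. (\<lambda>s. \<integral>\<^sup>+y. F (s + of_real y * w j) \<partial>gauss_line) (\<Sum>i\<in>I. of_real (x i) * w i)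
            \<partial>PiM I (\<lambda>_. gauss_line))"
      by (rule nn_integral_PiM_insert_sum[OF insert(1,2) F])
    also have "\<dots> = (\<integral>\<^sup>+p. (\<lambda>s. \<integral>\<^sup>+y. F (s + of_real y * w j) \<partial>gauss_line) (lincomb2 u v p) \<partial>gauss_plane)"
      by (rule IH) measurable
    also have "\<dots> = (\<integral>\<^sup>+p. F (lincomb2 u' v' p) \<partial>gauss_plane)"
      using reduce[OF F] by (simp add: expect_lincomb3_def)
    finally show ?thesis .
  qed
  ultimately show ?case
    using insert norms squares by (intro exI[of _ u'] exI[of _ v']) (auto simp: add.commute)
qed

section \<open>The squared radius of a planar Gaussian is exponentially distributed\<close>

definition sq_radius :: "real \<times> real \<Rightarrow> real" where
  "sq_radius p = (fst p)\<^sup>2 + (snd p)\<^sup>2"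

lemma sq_radius_measurable [measurable]: "sq_radius \<in> borel_measurable (lborel \<Otimes>\<^sub>M lborel)"
  unfolding sq_radius_def by measurable

lemma sq_radius_measurable_gauss_plane [measurable]: "sq_radius \<in> borel_measurable gauss_plane"
  unfolding sq_radius_def by measurable

lemma sq_radius_le_eq_cball: "r \<ge> 0 \<Longrightarrow> {p. sq_radius p \<le> r} = cball (0 :: real \<times> real) (sqrt r)"
  by (auto simp: sq_radius_def cball_def dist_norm norm_prod_def real_sqrt_le_iff' intro: real_le_rsqrt)

lemma emeasure_sq_radius_le:
  "emeasure (lborel \<Otimes>\<^sub>M lborel) {p. sq_radius p \<le> r} = ennreal (pi * max r 0)"
proof (cases "r \<ge> 0")
  case True
  have "emeasure (lborel \<Otimes>\<^sub>M lborel) {p. sq_radius p \<le> r}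
      = emeasure (lborel :: (real \<times> real) measure) (cball 0 (sqrt r))"
    by (simp add: lborel_prod sq_radius_le_eq_cball[OF True])
  also have "\<dots> = ennreal (pi * r)"
    using True by (simp add: emeasure_cball unit_ball_vol_2)
  finally show ?thesis using True by simp
next
  case False
  then have "{p. sq_radius p \<le> r} = {}"
    by (auto simp: sq_radius_def) (smt (verit) zero_le_power2)
  then show ?thesis using False by (simp del: Collect_empty_eq)
qed

lemma emeasure_sq_radius_Ioc:
  assumes "a \<le> b"
  shows "emeasure (lborel \<Otimes>\<^sub>M lborel) (sq_radius -` {a<..b}) = ennreal (pi * (max b 0 - max a 0))"
proof -
  have sets: "{p. sq_radius p \<le> r} \<in> sets (lborel \<Otimes>\<^sub>M lborel)" for r
    using measurable_sets[OF sq_radius_measurable, of "{..r}"] by (simp add: space_pair_measure vimage_def)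
  have "sq_radius -` {a<..b} = {p. sq_radius p \<le> b} - {p. sq_radius p \<le> a}"
    by auto
  moreover have "emeasure (lborel \<Otimes>\<^sub>M lborel) ({p. sq_radius p \<le> b} - {p. sq_radius p \<le> a})
      = emeasure (lborel \<Otimes>\<^sub>M lborel) {p. sq_radius p \<le> b} - emeasure (lborel \<Otimes>\<^sub>M lborel) {p. sq_radius p \<le> a}"
    using assms by (intro emeasure_Diff sets) (auto simp: emeasure_sq_radius_le)
  moreover have "ennreal (pi * max b 0) - ennreal (pi * max a 0) = ennreal (pi * (max b 0 - max a 0))"
    using assms by (subst ennreal_minus) (auto simp: algebra_simps)
  ultimately show ?thesis by (simp add: emeasure_sq_radius_le)
qed

lemma emeasure_density_pi_Ioc:
  assumes "a \<le> b"
  shows "emeasure (density lborel (\<lambda>x. ennreal pi * indicator {0<..} x)) {a<..b}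
       = ennreal (pi * (max b 0 - max a 0))"
proof -
  have "emeasure (density lborel (\<lambda>x. ennreal pi * indicator {0<..} x)) {a<..b}
      = (\<integral>\<^sup>+x. ennreal pi * indicator {max a 0<..max b 0} x \<partial>lborel)"
    by (subst emeasure_density) (auto intro!: nn_integral_cong split: split_indicator)
  also have "\<dots> = ennreal pi * emeasure lborel {max a 0<..max b 0}"
    by (subst nn_integral_cmult) auto
  also have "\<dots> = ennreal (pi * (max b 0 - max a 0))"
    using assms by (subst emeasure_lborel_Ioc) (auto simp: ennreal_mult)
  finally show ?thesis .
qed

text \<open>The area of the disc of radius \<open>\<surd>r\<close> is \<open>\<pi> r\<close>.\<close>
lemma distr_lborel2_sq_radius:
  "distr (lborel \<Otimes>\<^sub>M lborel) borel sq_radius = density lborel (\<lambda>x. ennreal pi * indicator {0<..} x)"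
proof (rule measure_eqI_generator_eq[where E = "range (\<lambda>(a, b). {a<..b::real})"
      and \<Omega> = UNIV and A = "\<lambda>i. {- real i<..real i}"])
  show "Int_stable (range (\<lambda>(a, b). {a<..b::real}))"
  proof (unfold Int_stable_def, safe)
    fix a b c d :: real
    have "{a<..b} \<inter> {c<..d} = {max a c<..min b d}" by auto
    then show "{a<..b} \<inter> {c<..d} \<in> range (\<lambda>(a, b). {a<..b})" by auto
  qed
  show "(\<Union>i. {- real i<..real i}) = UNIV"
  proof (safe; simp)
    fix x :: real
    obtain n :: nat where "\<bar>x\<bar> < n" using reals_Archimedean2 by blast
    then show "\<exists>i. - real i < x \<and> x \<le> real i" by (intro exI[of _ n]) auto
  qed
  fix i :: nat
  show "emeasure (distr (lborel \<Otimes>\<^sub>M lborel) borel sq_radius) {- real i<..real i} \<noteq> \<infinity>"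
    by (subst emeasure_distr) (auto simp: space_pair_measure emeasure_sq_radius_Ioc[simplified])
next
  fix X assume "X \<in> range (\<lambda>(a, b). {a<..b::real})"
  then obtain a b where X: "X = {a<..b}" by auto
  show "emeasure (distr (lborel \<Otimes>\<^sub>M lborel) borel sq_radius) X
      = emeasure (density lborel (\<lambda>x. ennreal pi * indicator {0<..} x)) X"
  proof (cases "a \<le> b")
    case True
    then show ?thesis unfolding X
      by (subst emeasure_distr)
        (auto simp: space_pair_measure emeasure_sq_radius_Ioc[simplified] emeasure_density_pi_Ioc)
  next
    case False
    then show ?thesis unfolding X by simp
  qed
qed (auto simp: borel_sigma_sets_Ioc)

definition exponential_law :: "real measure" where
  "exponential_law = density lborel (\<lambda>x. ennreal (exp (- x) * indicator {0<..} x))"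

lemma distr_gauss_plane_sq_radius: "distr gauss_plane borel sq_radius = exponential_law"
proof (rule measure_eqI)
  show "sets (distr gauss_plane borel sq_radius) = sets exponential_law"
    by (simp add: exponential_law_def)
  fix A assume "A \<in> sets (distr gauss_plane borel sq_radius)"
  then have A [measurable]: "A \<in> sets borel" by simp
  define h where "h = (\<lambda>x. ennreal (exp (- x) / pi) * indicator A x)"
  have [measurable]: "h \<in> borel_measurable borel" unfolding h_def by measurable
  have "emeasure (distr gauss_plane borel sq_radius) A = (\<integral>\<^sup>+p. indicator A (sq_radius p) \<partial>gauss_plane)"
    by (subst nn_integral_indicator[symmetric], simp, rule nn_integral_distr) measurable
  also have "\<dots> = (\<integral>\<^sup>+p. ennreal (gauss_pdf (fst p) * gauss_pdf (snd p)) * indicator A (sq_radius p)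
      \<partial>(lborel \<Otimes>\<^sub>M lborel))"
    unfolding gauss_plane_density by (rule nn_integral_density) measurable
  also have "\<dots> = (\<integral>\<^sup>+p. h (sq_radius p) \<partial>(lborel \<Otimes>\<^sub>M lborel))"
    by (rule nn_integral_cong) (simp add: h_def gauss_pdf_mult sq_radius_def)
  also have "\<dots> = (\<integral>\<^sup>+x. h x \<partial>distr (lborel \<Otimes>\<^sub>M lborel) borel sq_radius)"
    by (rule nn_integral_distr[symmetric]) measurable
  also have "\<dots> = (\<integral>\<^sup>+x. (ennreal pi * indicator {0<..} x) * h x \<partial>lborel)"
    unfolding distr_lborel2_sq_radius by (rule nn_integral_density) measurable
  also have "\<dots> = (\<integral>\<^sup>+x. ennreal (exp (- x) * indicator {0<..} x) * indicator A x \<partial>lborel)"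
    by (rule nn_integral_cong) (auto simp: h_def ennreal_mult[symmetric] split: split_indicator)
  also have "\<dots> = emeasure exponential_law A"
    unfolding exponential_law_def by (rule emeasure_density[symmetric]) auto
  finally show "emeasure (distr gauss_plane borel sq_radius) A = emeasure exponential_law A" .
qed

lemma abs_ln_le:
  fixes t :: real
  assumes t: "t > 0"
  shows "\<bar>ln t\<bar> \<le> 2 * t powr (-1/2) + t"
proof (cases "t \<ge> 1")
  case True
  then have "\<bar>ln t\<bar> = ln t" by simp
  then show ?thesis using ln_le_minus_one[OF t] powr_ge_zero[of t "-1/2"] by linarith
next
  case False
  have "ln (t powr (-1/2)) \<le> t powr (-1/2) - 1"
    using t by (intro ln_le_minus_one) simp
  then show ?thesis using False t by (simp add: ln_powr)
qed

text \<open>Dominate \<open>|ln x| e\<^sup>-\<^sup>x\<close> by Gamma integrands.\<close>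
lemma integrable_exp_ln:
  "integrable lborel (\<lambda>x::real. (exp (- x) * indicator {0<..} x) *\<^sub>R ln x)"
proof (rule integrableI_bounded)
  define g where "g = (\<lambda>a x::real. ennreal (indicator {0..} x * x powr (a - 1) / exp x))"
  have "ennreal (norm ((exp (- x) * indicator {0<..} x) *\<^sub>R ln x)) \<le> 2 * g (1/2) x + g 2 x" for x :: real
  proof (cases "x > 0")
    case True
    have "norm ((exp (- x) * indicator {0<..} x) *\<^sub>R ln x) = \<bar>ln x\<bar> / exp x"
      using True by (simp add: exp_minus field_simps)
    also have "\<dots> \<le> (2 * x powr (-1/2) + x) / exp x"
      by (rule divide_right_mono[OF abs_ln_le[OF True]]) simp
    also have "\<dots> = 2 * (x powr (1/2 - 1) / exp x) + x powr (2 - 1) / exp x"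
      using True by (simp add: add_divide_distrib)
    finally have "ennreal (norm ((exp (- x) * indicator {0<..} x) *\<^sub>R ln x))
        \<le> ennreal (2 * (x powr (1/2 - 1) / exp x) + x powr (2 - 1) / exp x)"
      by (rule ennreal_leI)
    also have "\<dots> = 2 * g (1/2) x + g 2 x"
      using True by (simp add: g_def ennreal_plus ennreal_mult del: times_divide_eq_right)
    finally show ?thesis .
  qed simp
  then have "(\<integral>\<^sup>+x. ennreal (norm ((exp (- x) * indicator {0<..} x) *\<^sub>R ln x)) \<partial>lborel)
      \<le> (\<integral>\<^sup>+x. 2 * g (1/2) x + g 2 x \<partial>lborel)"
    by (rule nn_integral_mono)
  also have "\<dots> = 2 * ennreal (Gamma (1/2)) + ennreal (Gamma 2)"
    unfolding g_def
    by (subst nn_integral_add) (auto simp: nn_integral_cmult Gamma_conv_nn_integral_real)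
  also have "\<dots> < \<infinity>" by (simp add: ennreal_mult_less_top)
  finally show "(\<integral>\<^sup>+x. ennreal (norm ((exp (- x) * indicator {0<..} x) *\<^sub>R ln x)) \<partial>lborel) < \<infinity>" .
qed simp

lemma integrable_gauss_plane_ln_sq_radius: "integrable gauss_plane (\<lambda>p. ln (sq_radius p))"
proof -
  have "integrable exponential_law ln"
    unfolding exponential_law_def by (subst integrable_density) (use integrable_exp_ln in auto)
  then show ?thesis
    unfolding distr_gauss_plane_sq_radius[symmetric] by (subst (asm) integrable_distr_eq) auto
qed

lemma integral_gauss_plane_ln_sq_radius:
  "(\<integral>p. ln (sq_radius p) \<partial>gauss_plane) = (LINT \<rho>:{0<..}|lborel. exp (- \<rho>) * ln \<rho>)"
proof -
  have "(\<integral>p. ln (sq_radius p) \<partial>gauss_plane) = (\<integral>x. ln x \<partial>exponential_law)"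
    unfolding distr_gauss_plane_sq_radius[symmetric] by (rule integral_distr[symmetric]) auto
  also have "\<dots> = (LINT \<rho>:{0<..}|lborel. exp (- \<rho>) * ln \<rho>)"
    unfolding exponential_law_def set_lebesgue_integral_def
    by (subst integral_density) (auto intro!: Bochner_Integration.integral_cong split: split_indicator)
  finally show ?thesis .
qed

section \<open>The phase \<open>\<zeta>\<^sup>*/\<zeta>\<close> of a planar Gaussian\<close>

abbreviation zeta :: "real \<times> real \<Rightarrow> complex" where
  "zeta \<equiv> lincomb2 1 \<i>"

definition phase :: "real \<times> real \<Rightarrow> complex" where
  "phase p = cnj (zeta p) / zeta p"

lemma cnj_zeta: "cnj (zeta p) = lincomb2 1 (- \<i>) p"
  by (simp add: lincomb2_def complex_eq_iff)

lemma zeta_rotation: "zeta (rotation c d p) = Complex c d * zeta p"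
  by (simp add: lincomb2_def rotation_def complex_eq_iff)

lemma zeta_nonzero: "p \<noteq> (0, 0) \<Longrightarrow> zeta p \<noteq> 0"
  by (cases p) (simp add: lincomb2_def complex_eq_iff)

lemma cmod_zeta_sq: "(cmod (zeta p))\<^sup>2 = sq_radius p"
  by (simp add: cmod_power2 lincomb2_def sq_radius_def)

lemma phase_measurable [measurable]: "phase \<in> borel_measurable gauss_plane"
  unfolding phase_def cnj_zeta by measurable

lemma norm_phase_le: "cmod (phase p) \<le> 1"
  by (cases "zeta p = 0") (auto simp: phase_def norm_divide)

text \<open>Rotating by \<open>\<theta> = \<pi>/(2n)\<close> multiplies \<open>phase\<^sup>n\<close> by \<open>-1\<close>.\<close>
lemma integral_phase_power:
  assumes n: "n \<ge> 1"
  shows "(\<integral>p. phase p ^ n \<partial>gauss_plane) = 0"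
proof -
  define \<theta> where "\<theta> = pi / (2 * real n)"
  have cd: "(cos \<theta>)\<^sup>2 + (sin \<theta>)\<^sup>2 = 1" by simp
  have flip: "cis (- 2 * \<theta>) ^ n = -1"
  proof -
    have "cis (- 2 * \<theta>) ^ n = cis (real n * (- 2 * \<theta>))" by (rule Complex.DeMoivre)
    also have "real n * (- 2 * \<theta>) = - pi" using n by (simp add: \<theta>_def field_simps)
    finally show ?thesis by (simp add: cis.ctr complex_eq_iff)
  qed
  have "phase (rotation (cos \<theta>) (sin \<theta>) p) = cis (- 2 * \<theta>) * phase p" for p
  proof (cases "zeta p = 0")
    case True
    then show ?thesis by (simp add: phase_def zeta_rotation)
  next
    case False
    have "phase (rotation (cos \<theta>) (sin \<theta>) p) = (cnj (cis \<theta>) / cis \<theta>) * phase p"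
      unfolding phase_def zeta_rotation using False by (simp add: cis.ctr field_simps)
    also have "cnj (cis \<theta>) / cis \<theta> = cis (- 2 * \<theta>)" by (simp add: cis_cnj cis_divide)
    finally show ?thesis .
  qed
  then have "phase (rotation (cos \<theta>) (sin \<theta>) p) ^ n = - (phase p ^ n)" for p
    using flip by (simp add: power_mult_distrib)
  moreover have "(\<integral>p. phase p ^ n \<partial>gauss_plane) = (\<integral>p. phase (rotation (cos \<theta>) (sin \<theta>) p) ^ n \<partial>gauss_plane)"
    by (rule integral_gauss_plane_rotation[symmetric, OF _ cd]) measurable
  ultimately show ?thesis by simp
qed

text \<open>Integrate the power series \<open>Ln (1 + w) = \<Sum>\<^sub>k (-1)\<^sup>k\<^sup>+\<^sup>1 w\<^sup>k/k\<close> term by term.\<close>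
lemma integral_ln_one_plus_phase:
  fixes c :: complex
  assumes c: "cmod c < 1"
  shows "integrable gauss_plane (\<lambda>p. ln (1 + c * phase p))"
    and "(\<integral>p. ln (1 + c * phase p) \<partial>gauss_plane) = 0"
proof -
  define f where "f = (\<lambda>k p. (-1) ^ Suc k / of_nat k * (c * phase p) ^ k :: complex)"
  have "(\<lambda>k. f k p) sums ln (1 + c * phase p)" for p
  proof -
    have "cmod (c * phase p) \<le> cmod c"
      using norm_phase_le[of p] by (simp add: norm_mult mult_left_le)
    then show ?thesis unfolding f_def using c by (intro Ln_series) simp
  qed
  then have ln_eq: "ln (1 + c * phase p) = (\<Sum>k. f k p)" for p
    by (simp add: sums_unique)
  have [measurable]: "f k \<in> borel_measurable gauss_plane" for k
    unfolding f_def by measurable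
  have bound: "norm (f k p) \<le> cmod c ^ k" for k p
  proof (cases "k = 0")
    case False
    have "norm (f k p) = (1 / real k) * (cmod c * cmod (phase p)) ^ k"
      by (simp add: f_def norm_mult norm_power norm_divide)
    also have "\<dots> \<le> 1 * (cmod c * 1) ^ k"
      using False by (intro mult_mono power_mono mult_left_mono norm_phase_le) auto
    finally show ?thesis by simp
  qed (simp add: f_def)
  have int: "integrable gauss_plane (f k)" for k
    by (rule gauss_plane.integrable_const_bound[where B = "cmod c ^ k"]) (auto simp: bound)
  have geometric: "summable (\<lambda>k. cmod c ^ k)"
    using c by (simp add: summable_geometric)
  have summable_norm: "AE p in gauss_plane. summable (\<lambda>k. norm (f k p))"
    by (intro AE_I2 summable_comparison_test[OF _ geometric]) (auto simp: bound)
  have "(\<integral>p. norm (f k p) \<partial>gauss_plane) \<le> (\<integral>p. cmod c ^ k \<partial>gauss_plane)" for k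
    by (rule integral_mono) (auto simp: bound int)
  then have summable_integral: "summable (\<lambda>k. \<integral>p. norm (f k p) \<partial>gauss_plane)"
    by (intro summable_comparison_test[OF _ geometric]) (auto simp: gauss_plane.prob_space)
  have "(\<integral>p. f k p \<partial>gauss_plane) = 0" for k
    using integral_phase_power[of k]
    by (cases "k = 0") (simp_all add: f_def power_mult_distrib mult.assoc)
  then show "integrable gauss_plane (\<lambda>p. ln (1 + c * phase p))"
    and "(\<integral>p. ln (1 + c * phase p) \<partial>gauss_plane) = 0"
    unfolding ln_eq using integrable_suminf[OF int summable_norm summable_integral]
      integral_suminf[OF int summable_norm summable_integral] by simp_all
qed

section \<open>The expected log-modulus of \<open>A \<zeta> + B \<zeta>\<^sup>*\<close>\<close>

lemma ln_cmod_sq_zeta_cnj_measurable: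
  "(\<lambda>p. ln ((cmod (A * zeta p + B * cnj (zeta p)))\<^sup>2)) \<in> borel_measurable gauss_plane"
  unfolding cnj_zeta by measurable

text \<open>For \<open>|B| < |A|\<close> and \<open>\<zeta> \<noteq> 0\<close>: \<open>A \<zeta> + B \<zeta>\<^sup>* = A \<zeta> (1 + (B/A) phase)\<close>.\<close>
lemma integral_ln_cmod_sq_zeta_cnj_dominant:
  fixes A B :: complex
  assumes AB: "cmod B < cmod A"
  shows "integrable gauss_plane (\<lambda>p. ln ((cmod (A * zeta p + B * cnj (zeta p)))\<^sup>2))"
    and "(\<integral>p. ln ((cmod (A * zeta p + B * cnj (zeta p)))\<^sup>2) \<partial>gauss_plane)
           = ln ((cmod A)\<^sup>2) + (LINT \<rho>:{0<..}|lborel. exp (- \<rho>) * ln \<rho>)"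
proof -
  have A0: "A \<noteq> 0" using AB by auto
  define c where "c = B / A"
  have c: "cmod c < 1" using AB A0 by (simp add: c_def norm_divide)
  define G where "G = (\<lambda>p. ln ((cmod A)\<^sup>2) + ln (sq_radius p) + 2 * Re (ln (1 + c * phase p)))"
  have intG: "integrable gauss_plane G"
    unfolding G_def using integral_ln_one_plus_phase(1)[OF c] integrable_gauss_plane_ln_sq_radius by auto
  have "(\<integral>p. Re (ln (1 + c * phase p)) \<partial>gauss_plane) = 0"
    using integral_bounded_linear[OF bounded_linear_Re integral_ln_one_plus_phase(1)[OF c]]
      integral_ln_one_plus_phase(2)[OF c] by simp
  then have integral_G: "(\<integral>p. G p \<partial>gauss_plane) = ln ((cmod A)\<^sup>2) + (LINT \<rho>:{0<..}|lborel. exp (- \<rho>) * ln \<rho>)"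
    unfolding G_def using integral_ln_one_plus_phase(1)[OF c] integrable_gauss_plane_ln_sq_radius
    by (simp add: integral_gauss_plane_ln_sq_radius gauss_plane.prob_space)
  have ae: "AE p in gauss_plane. ln ((cmod (A * zeta p + B * cnj (zeta p)))\<^sup>2) = G p"
    using AE_gauss_plane_nonzero
  proof (rule AE_mp, intro AE_I2 impI)
    fix p :: "real \<times> real" assume "p \<noteq> (0, 0)"
    then have z: "zeta p \<noteq> 0" by (rule zeta_nonzero)
    have "cmod (c * phase p) < 1"
      using norm_phase_le[of p] c by (simp add: norm_mult) (smt (verit) mult_left_le norm_ge_zero)
    then have nz: "1 + c * phase p \<noteq> 0"
      by (metis add.inverse_unique norm_minus_cancel norm_one order_less_irrefl)
    have "A * zeta p + B * cnj (zeta p) = A * zeta p * (1 + c * phase p)"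
      using z A0 by (simp add: c_def phase_def field_simps)
    then have "(cmod (A * zeta p + B * cnj (zeta p)))\<^sup>2 = (cmod A)\<^sup>2 * sq_radius p * (cmod (1 + c * phase p))\<^sup>2"
      by (simp add: norm_mult power_mult_distrib cmod_zeta_sq)
    moreover have "sq_radius p > 0"
      using z cmod_zeta_sq[of p] by (metis zero_less_power2 norm_eq_zero zero_less_norm_iff)
    moreover have "ln ((cmod (1 + c * phase p))\<^sup>2) = 2 * Re (ln (1 + c * phase p))"
      using nz by (simp add: ln_realpow Re_Ln)
    ultimately show "ln ((cmod (A * zeta p + B * cnj (zeta p)))\<^sup>2) = G p"
      using A0 nz by (simp add: G_def ln_mult)
  qed
  show "integrable gauss_plane (\<lambda>p. ln ((cmod (A * zeta p + B * cnj (zeta p)))\<^sup>2))"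
    using integrable_cong_AE[OF ln_cmod_sq_zeta_cnj_measurable _ ae] intG by (auto intro: borel_measurable_integrable)
  show "(\<integral>p. ln ((cmod (A * zeta p + B * cnj (zeta p)))\<^sup>2) \<partial>gauss_plane)
           = ln ((cmod A)\<^sup>2) + (LINT \<rho>:{0<..}|lborel. exp (- \<rho>) * ln \<rho>)"
    using integral_cong_AE[OF ln_cmod_sq_zeta_cnj_measurable _ ae] intG integral_G by (auto intro: borel_measurable_integrable)
qed

lemma integral_ln_cmod_sq_zeta_cnj:
  fixes A B :: complex
  assumes "cmod A \<noteq> cmod B"
  shows "integrable gauss_plane (\<lambda>p. ln ((cmod (A * zeta p + B * cnj (zeta p)))\<^sup>2))"
    and "(\<integral>p. ln ((cmod (A * zeta p + B * cnj (zeta p)))\<^sup>2) \<partial>gauss_plane)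
           = ln (max ((cmod A)\<^sup>2) ((cmod B)\<^sup>2)) + (LINT \<rho>:{0<..}|lborel. exp (- \<rho>) * ln \<rho>)"
proof -
  have swap: "cmod (A * zeta p + B * cnj (zeta p)) = cmod (cnj B * zeta p + cnj A * cnj (zeta p))" for p
    by (metis complex_mod_cnj complex_cnj_add complex_cnj_mult complex_cnj_cnj add.commute)
  obtain A' B' where dominant: "cmod B' < cmod A'" and max: "max ((cmod A)\<^sup>2) ((cmod B)\<^sup>2) = (cmod A')\<^sup>2"
    and same: "\<And>p. cmod (A * zeta p + B * cnj (zeta p)) = cmod (A' * zeta p + B' * cnj (zeta p))"
  proof (cases "cmod B < cmod A")
    case True
    then show thesis by (intro that[of B A]) (simp_all add: power_mono max_def)
  next
    case False
    then show thesis
      using assms swap by (intro that[of "cnj A" "cnj B"]) (simp_all add: power_mono max_def)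
  qed
  show "integrable gauss_plane (\<lambda>p. ln ((cmod (A * zeta p + B * cnj (zeta p)))\<^sup>2))"
    and "(\<integral>p. ln ((cmod (A * zeta p + B * cnj (zeta p)))\<^sup>2) \<partial>gauss_plane)
           = ln (max ((cmod A)\<^sup>2) ((cmod B)\<^sup>2)) + (LINT \<rho>:{0<..}|lborel. exp (- \<rho>) * ln \<rho>)"
    unfolding same max using integral_ln_cmod_sq_zeta_cnj_dominant[OF dominant] by simp_all
qed

section \<open>The Gaussian measure on a Euclidean space as a product\<close>

definition basis_comb :: "('a \<Rightarrow> real) \<Rightarrow> 'a::euclidean_space" where
  "basis_comb f = (\<Sum>b\<in>Basis. f b *\<^sub>R b)"

lemma basis_comb_measurable:
  assumes "sets M = sets borel"
  shows "basis_comb \<in> borel_measurable (PiM Basis (\<lambda>_. M))"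
proof -
  have "(\<lambda>x. x b) \<in> borel_measurable (PiM Basis (\<lambda>_. M))" if "b \<in> Basis" for b
    using measurable_component_singleton[OF that, of "\<lambda>_. M"]
    by (simp add: measurable_cong_sets[OF refl assms])
  then show ?thesis
    unfolding basis_comb_def by (intro borel_measurable_sum borel_measurable_scaleR borel_measurable_const)
qed

lemma basis_comb_measurable_lborel [measurable]: "basis_comb \<in> borel_measurable (PiM Basis (\<lambda>_. lborel))"
  by (rule basis_comb_measurable) simp

lemma basis_comb_measurable_gauss_line [measurable]:
  "basis_comb \<in> borel_measurable (PiM Basis (\<lambda>_. gauss_line))"
  by (rule basis_comb_measurable) simp

lemma norm_basis_comb_sq: "(norm (basis_comb f))\<^sup>2 = (\<Sum>b\<in>Basis. (f b)\<^sup>2)"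
proof -
  have "(norm (basis_comb f))\<^sup>2 = (\<Sum>b\<in>Basis. f b * inner (basis_comb f) b)"
    by (simp add: power2_norm_eq_inner basis_comb_def inner_sum_left inner_commute)
  also have "\<dots> = (\<Sum>b\<in>Basis. (f b)\<^sup>2)"
    by (intro sum.cong refl) (simp add: basis_comb_def inner_sum_left_Basis power2_eq_square)
  finally show ?thesis .
qed

lemma gauss_density_basis_comb:
  "pi powr (- real DIM('a) / 2) * exp (- (norm (basis_comb f :: 'a::euclidean_space))\<^sup>2)
     = (\<Prod>b\<in>Basis. gauss_pdf (f b))"
proof -
  have "(\<Prod>b\<in>(Basis::'a set). gauss_pdf (f b)) = (\<Prod>b\<in>(Basis::'a set). exp (- (f b)\<^sup>2)) * inverse (sqrt pi) ^ DIM('a)"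
    by (simp add: gauss_pdf_def divide_inverse prod.distrib)
  also have "(\<Prod>b\<in>(Basis::'a set). exp (- (f b)\<^sup>2)) = exp (- (norm (basis_comb f :: 'a))\<^sup>2)"
    by (simp add: norm_basis_comb_sq exp_sum[symmetric] sum_negf)
  also have "inverse (sqrt pi) = pi powr (-1/2)"
    by (simp add: powr_minus powr_half_sqrt[symmetric])
  also have "(pi powr (-1/2)) ^ DIM('a) = pi powr (- real DIM('a) / 2)"
    by (simp add: powr_power)
  finally show ?thesis by simp
qed

lemma indicator_PiE_eq_prod:
  assumes "finite I" "f \<in> extensional I"
  shows "(indicator (Pi\<^sub>E I A) f :: ennreal) = (\<Prod>i\<in>I. indicator (A i) (f i))"
proof (cases "\<forall>i\<in>I. f i \<in> A i")
  case True
  then show ?thesis using assms by (auto simp: PiE_def indicator_def)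
next
  case False
  then obtain i where i: "i \<in> I" "f i \<notin> A i" by blast
  then have "(\<Prod>i\<in>I. indicator (A i) (f i) :: ennreal) = indicator (A i) (f i) * (\<Prod>i\<in>I-{i}. indicator (A i) (f i))"
    using assms(1) by (simp add: prod.remove)
  then show ?thesis
    using i by (auto simp: PiE_def indicator_def)
qed

lemma density_PiM_lborel_gauss_pdf:
  fixes I :: "'i set"
  assumes I: "finite I"
  shows "density (PiM I (\<lambda>_. lborel)) (\<lambda>f. \<Prod>i\<in>I. ennreal (gauss_pdf (f i))) = PiM I (\<lambda>_. gauss_line)"
proof -
  interpret gauss_product: product_prob_space "\<lambda>_::'i. gauss_line" by unfold_locales
  interpret lborel_product: product_sigma_finite "\<lambda>_::'i. lborel" by unfold_locales
  show ?thesis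
  proof (rule gauss_product.PiM_eqI)
    show "sets (density (PiM I (\<lambda>_. lborel)) (\<lambda>f. \<Prod>i\<in>I. ennreal (gauss_pdf (f i)))) = sets (PiM I (\<lambda>_. gauss_line))"
      unfolding sets_density by (rule sets_PiM_cong) auto
    fix A :: "'i \<Rightarrow> real set" assume A: "\<And>i. i \<in> I \<Longrightarrow> A i \<in> sets gauss_line"
    then have A_sets: "Pi\<^sub>E I A \<in> sets (PiM I (\<lambda>_. lborel))"
      by (intro sets_PiM_I_finite) (auto simp: I)
    have "emeasure (density (PiM I (\<lambda>_. lborel)) (\<lambda>f. \<Prod>i\<in>I. ennreal (gauss_pdf (f i)))) (Pi\<^sub>E I A)
        = (\<integral>\<^sup>+f. (\<Prod>i\<in>I. ennreal (gauss_pdf (f i))) * indicator (Pi\<^sub>E I A) f \<partial>PiM I (\<lambda>_. lborel))"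
      by (rule emeasure_density[OF _ A_sets]) measurable
    also have "\<dots> = (\<integral>\<^sup>+f. (\<Prod>i\<in>I. ennreal (gauss_pdf (f i)) * indicator (A i) (f i)) \<partial>PiM I (\<lambda>_. lborel))"
    proof (rule nn_integral_cong)
      fix f :: "'i \<Rightarrow> real" assume "f \<in> space (PiM I (\<lambda>_. lborel :: real measure))"
      then have "f \<in> extensional I" by (simp add: space_PiM PiE_def)
      then show "(\<Prod>i\<in>I. ennreal (gauss_pdf (f i))) * indicator (Pi\<^sub>E I A) f
          = (\<Prod>i\<in>I. ennreal (gauss_pdf (f i)) * indicator (A i) (f i))"
        using indicator_PiE_eq_prod[OF I, of f A] by (simp add: prod.distrib)
    qed
    also have "\<dots> = (\<Prod>i\<in>I. \<integral>\<^sup>+x. ennreal (gauss_pdf x) * indicator (A i) x \<partial>lborel)"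
      by (rule lborel_product.product_nn_integral_prod) (use A I in auto)
    also have "\<dots> = (\<Prod>i\<in>I. emeasure gauss_line (A i))"
      using A by (intro prod.cong refl) (simp add: gauss_line_def emeasure_density)
    finally show "emeasure (density (PiM I (\<lambda>_. lborel)) (\<lambda>f. \<Prod>i\<in>I. ennreal (gauss_pdf (f i)))) (Pi\<^sub>E I A)
        = (\<Prod>i\<in>I. emeasure gauss_line (A i))" .
  qed (rule I)
qed

lemma gauss_density_eq_distr_PiM:
  "density lborel (\<lambda>a::'a::euclidean_space. ennreal (pi powr (- real DIM('a) / 2) * exp (- (norm a)\<^sup>2)))
     = distr (PiM Basis (\<lambda>_. gauss_line)) borel basis_comb"
proof -
  define P where "P = (\<lambda>a::'a. ennreal (pi powr (- real DIM('a) / 2) * exp (- (norm a)\<^sup>2)))"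
  have [measurable]: "P \<in> borel_measurable borel" unfolding P_def by measurable
  have lborel_eq': "(lborel :: 'a measure) = distr (PiM Basis (\<lambda>_. lborel)) borel basis_comb"
    unfolding basis_comb_def by (rule lborel_eq)
  have "density lborel P = distr (density (PiM Basis (\<lambda>_. lborel)) (\<lambda>f. P (basis_comb f))) borel basis_comb"
    by (subst lborel_eq', rule density_distr) measurable
  also have "(\<lambda>f. P (basis_comb f)) = (\<lambda>f. \<Prod>b\<in>Basis. ennreal (gauss_pdf (f b)))"
    unfolding P_def gauss_density_basis_comb by (simp add: prod_ennreal)
  also have "density (PiM Basis (\<lambda>_. lborel)) \<dots> = PiM Basis (\<lambda>_. gauss_line)"
    by (rule density_PiM_lborel_gauss_pdf) simp
  finally show ?thesis unfolding P_def .
qed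

section \<open>Reduction of \<^const>\<open>E_CP\<close> to the plane\<close>

lemma gauss_measure_eq_distr_PiM:
  "(gauss_measure :: (real^'n) measure) = distr (PiM Basis (\<lambda>_. gauss_line)) borel basis_comb"
  unfolding gauss_measure_def using gauss_density_eq_distr_PiM[where 'a = "real^'n"] by simp

lemma sum_Basis_vec_real: "(\<Sum>b\<in>(Basis :: (real^'n) set). g b) = (\<Sum>i\<in>UNIV. g (axis i 1))"
proof -
  have Basis_eq: "(Basis :: (real^'n) set) = range (\<lambda>i. axis i 1)"
    by (auto simp: Basis_vec_def)
  show ?thesis
    unfolding Basis_eq by (subst sum.reindex) (auto simp: inj_on_def axis_eq_axis)
qed

lemma norm_vec_sq: "(norm (z :: complex^'n))\<^sup>2 = (\<Sum>i\<in>UNIV. (cmod (z $ i))\<^sup>2)"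
  by (simp add: norm_vec_def L2_set_def sum_nonneg)

definition pairing :: "real^'n \<Rightarrow> complex^'n \<Rightarrow> complex" where
  "pairing a z = (\<Sum>i\<in>UNIV. of_real (a $ i) * z $ i)"

lemma pairing_measurable [measurable]: "(\<lambda>a. pairing a z) \<in> borel_measurable borel"
  unfolding pairing_def by measurable

lemma pairing_axis: "pairing (axis j 1) z = z $ j"
proof -
  have "pairing (axis j 1) z = (\<Sum>i\<in>UNIV. if i = j then z $ i else 0)"
    unfolding pairing_def by (intro sum.cong) (auto simp: axis_def)
  then show ?thesis by simp
qed

lemma pairing_basis_comb: "pairing (basis_comb f) z = (\<Sum>b\<in>Basis. of_real (f b) * pairing b z)"
proof -
  have "pairing (basis_comb f) z = (\<Sum>i\<in>UNIV. \<Sum>b\<in>Basis. of_real (f b) * (of_real (b $ i) * z $ i))"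
    unfolding pairing_def basis_comb_def by (simp add: sum_component sum_distrib_right mult.assoc)
  also have "\<dots> = (\<Sum>b\<in>Basis. of_real (f b) * pairing b z)"
    unfolding pairing_def by (subst sum.swap) (simp add: sum_distrib_left)
  finally show ?thesis .
qed

lemma section_norm_sq_eq_pairing:
  fixes z :: "complex^'n"
  shows "section_norm_sq a z = real CARD('n) / (norm z)\<^sup>2 * (cmod (pairing a z))\<^sup>2"
proof -
  have "real_section a z = of_real (sqrt (real CARD('n))) * pairing a z"
    unfolding real_section_def pairing_def by (simp add: sum_distrib_left algebra_simps)
  then show ?thesis
    unfolding section_norm_sq_def by (simp add: norm_mult power_mult_distrib)
qed

lemma E_CP_eq_integral_lincomb2:
  fixes z :: "complex^'n"
  obtains u v where
    "E_CP z = (\<integral>p. ln (real CARD('n) / (norm z)\<^sup>2 * (cmod (lincomb2 u v p))\<^sup>2) \<partial>gauss_plane)"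
    "(cmod u)\<^sup>2 + (cmod v)\<^sup>2 = (norm z)\<^sup>2" "u\<^sup>2 + v\<^sup>2 = (\<Sum>i\<in>UNIV. (z $ i)\<^sup>2)"
proof -
  define H where "H = (\<lambda>w::complex. ln (real CARD('n) / (norm z)\<^sup>2 * (cmod w)\<^sup>2))"
  define S where "S = (\<lambda>f::real^'n \<Rightarrow> real. \<Sum>b\<in>Basis. of_real (f b) * pairing b z)"
  have [measurable]: "H \<in> borel_measurable borel" unfolding H_def by measurable
  have S_eq: "S = (\<lambda>f. pairing (basis_comb f) z)"
    by (simp add: S_def pairing_basis_comb fun_eq_iff)
  have [measurable]: "S \<in> borel_measurable (PiM Basis (\<lambda>_. gauss_line))"
    unfolding S_eq by measurable
  obtain u v where
    reduce: "\<forall>F \<in> borel_measurable borel. (\<integral>\<^sup>+x. F (S x) \<partial>PiM Basis (\<lambda>_. gauss_line))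
      = (\<integral>\<^sup>+p. F (lincomb2 u v p) \<partial>gauss_plane)"
    and norms: "(cmod u)\<^sup>2 + (cmod v)\<^sup>2 = (\<Sum>b\<in>Basis. (cmod (pairing b z))\<^sup>2)"
    and squares: "u\<^sup>2 + v\<^sup>2 = (\<Sum>b\<in>Basis. (pairing b z)\<^sup>2)"
    using gauss_lincomb_reduce_to_plane[of "Basis :: (real^'n) set" "\<lambda>b. pairing b z"]
    unfolding S_def by auto
  have law: "distr (PiM Basis (\<lambda>_. gauss_line)) borel S = distr gauss_plane borel (lincomb2 u v)"
    by (rule distr_eqI_nn_integral) (use reduce in auto)
  have "E_CP z = (\<integral>a. H (pairing a z) \<partial>gauss_measure)"
    unfolding E_CP_def H_def section_norm_sq_eq_pairing ..
  also have "\<dots> = (\<integral>f. H (S f) \<partial>PiM Basis (\<lambda>_. gauss_line))"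
    unfolding gauss_measure_eq_distr_PiM S_eq
    by (rule integral_distr) measurable
  also have "\<dots> = (\<integral>w. H w \<partial>distr gauss_plane borel (lincomb2 u v))"
    unfolding law[symmetric] by (rule integral_distr[symmetric]) measurable
  also have "\<dots> = (\<integral>p. H (lincomb2 u v p) \<partial>gauss_plane)"
    by (rule integral_distr) measurable
  finally show thesis
    using norms squares
    by (intro that) (simp_all add: H_def sum_Basis_vec_real pairing_axis norm_vec_sq)
qed

section \<open>Real points\<close>

lemma Im_eq_0_if_sum_sq_eq_sum_cmod_sq:
  fixes y :: "'i \<Rightarrow> complex"
  assumes "finite I" "(\<Sum>i\<in>I. (y i)\<^sup>2) = of_real (\<Sum>i\<in>I. (cmod (y i))\<^sup>2)" "i \<in> I"
  shows "Im (y i) = 0"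
proof -
  have "(\<Sum>i\<in>I. (Re (y i))\<^sup>2 - (Im (y i))\<^sup>2) = (\<Sum>i\<in>I. (Re (y i))\<^sup>2 + (Im (y i))\<^sup>2)"
    using arg_cong[OF assms(2), of Re] by (simp add: Re_sum Re_power2 cmod_power2)
  then have "(\<Sum>i\<in>I. (Im (y i))\<^sup>2) = 0"
    by (simp add: sum.distrib sum_subtractf)
  then show ?thesis
    using assms(1,3) by (simp add: sum_nonneg_eq_0_iff)
qed

text \<open>If \<open>|\<Sum> z\<^sub>i\<^sup>2| = \<Sum> |z\<^sub>i|\<^sup>2\<close>, rotating \<open>z\<close> by a square root of the phase of \<open>\<Sum> z\<^sub>i\<^sup>2\<close>
makes that sum real and equal to \<open>\<Sum> |z\<^sub>i|\<^sup>2\<close>, which forces every coordinate to be real.\<close>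
lemma in_RP_if_cmod_sum_sq_eq_norm_sq:
  fixes z :: "complex^'n"
  assumes eq: "cmod (\<Sum>i\<in>UNIV. (z $ i)\<^sup>2) = (norm z)\<^sup>2"
  shows "in_RP z"
proof (cases "z = 0")
  case True
  then have "z = 0 *s (\<chi> i. complex_of_real (0 $ i))" by (simp add: vec_eq_iff)
  then show ?thesis unfolding in_RP_def by blast
next
  case False
  define S where "S = (\<Sum>i\<in>UNIV. (z $ i)\<^sup>2)"
  have S: "cmod S > 0" using False eq by (simp add: S_def)
  define \<omega> where "\<omega> = csqrt (S / of_real (cmod S))"
  have \<omega>_sq: "\<omega>\<^sup>2 = S / of_real (cmod S)" by (simp add: \<omega>_def)
  then have "(cmod \<omega>)\<^sup>2 = 1" using S by (simp add: norm_power[symmetric] norm_divide)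
  then have \<omega>: "cmod \<omega> = 1" by (simp add: power2_eq_1_iff) (smt (verit) norm_ge_zero)
  define y where "y = (\<lambda>i. z $ i / \<omega>)"
  have "(\<Sum>i\<in>UNIV. (y i)\<^sup>2) = S / \<omega>\<^sup>2"
    by (simp add: y_def S_def power_divide sum_divide_distrib)
  also have "\<dots> = of_real (cmod S)"
    using \<omega>_sq S \<omega> by (subst divide_eq_eq) (auto simp: mult.commute)
  also have "cmod S = (\<Sum>i\<in>UNIV. (cmod (y i))\<^sup>2)"
    using eq \<omega> by (simp add: y_def norm_divide S_def norm_vec_sq)
  finally have "Im (y i) = 0" for i
    by (intro Im_eq_0_if_sum_sq_eq_sum_cmod_sq[of UNIV]) auto
  then have "y i = of_real (Re (y i))" for i
    by (simp add: complex_eq_iff)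
  then have "z $ i = \<omega> * of_real ((\<chi> i. Re (y i)) $ i)" for i
    using \<omega> by (auto simp: y_def field_simps)
  then have "z = \<omega> *s (\<chi> i. complex_of_real ((\<chi> i. Re (y i)) $ i))"
    by (simp add: vec_eq_iff)
  then show ?thesis unfolding in_RP_def by blast
qed

lemma cmod_sum_sq_less_norm_sq:
  fixes z :: "complex^'n"
  assumes "\<not> in_RP z"
  shows "cmod (\<Sum>i\<in>UNIV. (z $ i)\<^sup>2) < (norm z)\<^sup>2"
proof -
  have "cmod (\<Sum>i\<in>UNIV. (z $ i)\<^sup>2) \<le> (\<Sum>i\<in>UNIV. cmod ((z $ i)\<^sup>2))" by (rule norm_sum)
  then have "cmod (\<Sum>i\<in>UNIV. (z $ i)\<^sup>2) \<le> (norm z)\<^sup>2" by (simp add: norm_power norm_vec_sq)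
  moreover have "cmod (\<Sum>i\<in>UNIV. (z $ i)\<^sup>2) \<noteq> (norm z)\<^sup>2"
    using assms in_RP_if_cmod_sum_sq_eq_norm_sq by blast
  ultimately show ?thesis by linarith
qed

lemma max_eq_if_sum_prod:
  fixes a b s q :: real
  assumes sum: "a + b = 2 * s" and prod: "a * b = q\<^sup>2"
  shows "max a b = s + sqrt (s\<^sup>2 - q\<^sup>2)"
proof -
  have "(a - b)\<^sup>2 = (a + b)\<^sup>2 - 4 * (a * b)"
    by (simp add: power2_eq_square algebra_simps)
  also have "\<dots> = 2\<^sup>2 * (s\<^sup>2 - q\<^sup>2)"
    unfolding sum prod by (simp add: power2_eq_square algebra_simps)
  finally have "\<bar>a - b\<bar> = 2 * sqrt (s\<^sup>2 - q\<^sup>2)"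
    by (metis real_sqrt_abs real_sqrt_mult abs_numeral real_sqrt_abs[of 2])
  then show ?thesis using sum by (auto simp: max_def abs_if split: if_splits)
qed

lemma lincomb2_eq_zeta_cnj:
  "lincomb2 u v p = ((u - \<i> * v) * zeta p + (u + \<i> * v) * cnj (zeta p)) / 2"
  by (simp add: lincomb2_def complex_eq_iff algebra_simps)

text \<open>\<open>A = u - i v\<close> and \<open>B = u + i v\<close> satisfy \<open>|A|\<^sup>2 + |B|\<^sup>2 = 2 Z\<close> and \<open>A B = u\<^sup>2 + v\<^sup>2\<close>, so
\<open>|A|\<^sup>2\<close> and \<open>|B|\<^sup>2\<close> are the roots of \<open>X\<^sup>2 - 2 Z X + |u\<^sup>2 + v\<^sup>2|\<^sup>2\<close>.\<close>
lemma cmod_sq_minus_plus_i_mult: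
  fixes u v :: complex
  assumes norms: "(cmod u)\<^sup>2 + (cmod v)\<^sup>2 = Z" and less: "cmod (u\<^sup>2 + v\<^sup>2) < Z"
  shows "cmod (u - \<i> * v) \<noteq> cmod (u + \<i> * v)"
    and "max ((cmod (u - \<i> * v))\<^sup>2) ((cmod (u + \<i> * v))\<^sup>2) = Z + sqrt (Z\<^sup>2 - (cmod (u\<^sup>2 + v\<^sup>2))\<^sup>2)"
proof -
  define P where "P = cmod (u\<^sup>2 + v\<^sup>2)"
  have sum: "(cmod (u - \<i> * v))\<^sup>2 + (cmod (u + \<i> * v))\<^sup>2 = 2 * Z"
    using norms unfolding cmod_power2 by (simp add: power2_eq_square algebra_simps)
  have "(u - \<i> * v) * (u + \<i> * v) = u\<^sup>2 + v\<^sup>2"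
    by (simp add: algebra_simps power2_eq_square)
  then have prod: "(cmod (u - \<i> * v))\<^sup>2 * (cmod (u + \<i> * v))\<^sup>2 = P\<^sup>2"
    unfolding P_def by (metis norm_mult power_mult_distrib)
  show "max ((cmod (u - \<i> * v))\<^sup>2) ((cmod (u + \<i> * v))\<^sup>2) = Z + sqrt (Z\<^sup>2 - (cmod (u\<^sup>2 + v\<^sup>2))\<^sup>2)"
    using max_eq_if_sum_prod[OF sum prod] by (simp add: P_def)
  show "cmod (u - \<i> * v) \<noteq> cmod (u + \<i> * v)"
  proof
    assume eq: "cmod (u - \<i> * v) = cmod (u + \<i> * v)"
    then have "(cmod (u - \<i> * v))\<^sup>2 = Z" using sum by simp
    then have "Z\<^sup>2 = P\<^sup>2" using prod eq by (simp add: power2_eq_square)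
    moreover have "P\<^sup>2 < Z\<^sup>2" using less by (simp add: P_def power_strict_mono)
    ultimately show False by simp
  qed
qed

lemma integral_ln_cmod_sq_lincomb2:
  assumes norms: "(cmod u)\<^sup>2 + (cmod v)\<^sup>2 = Z" and less: "cmod (u\<^sup>2 + v\<^sup>2) < Z" and c: "c > 0"
  shows "(\<integral>p. ln (c * (cmod (lincomb2 u v p))\<^sup>2) \<partial>gauss_plane)
       = ln (c / 4) + ln (Z + sqrt (Z\<^sup>2 - (cmod (u\<^sup>2 + v\<^sup>2))\<^sup>2)) + (LINT \<rho>:{0<..}|lborel. exp (- \<rho>) * ln \<rho>)"
proof -
  define A where "A = u - \<i> * v"
  define B where "B = u + \<i> * v"
  have AB: "cmod A \<noteq> cmod B"
    and max: "max ((cmod A)\<^sup>2) ((cmod B)\<^sup>2) = Z + sqrt (Z\<^sup>2 - (cmod (u\<^sup>2 + v\<^sup>2))\<^sup>2)"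
    unfolding A_def B_def using cmod_sq_minus_plus_i_mult[OF norms less] by simp_all
  have ae: "AE p in gauss_plane. ln (c * (cmod (lincomb2 u v p))\<^sup>2)
      = ln (c / 4) + ln ((cmod (A * zeta p + B * cnj (zeta p)))\<^sup>2)"
    using AE_gauss_plane_nonzero
  proof (rule AE_mp, intro AE_I2 impI)
    fix p :: "real \<times> real" assume p: "p \<noteq> (0, 0)"
    have nonzero: "A * zeta p + B * cnj (zeta p) \<noteq> 0"
    proof
      assume "A * zeta p + B * cnj (zeta p) = 0"
      then have "cmod (A * zeta p) = cmod (B * cnj (zeta p))"
        by (metis add_eq_0_iff norm_minus_cancel)
      then show False using AB zeta_nonzero[OF p] by (simp add: norm_mult)
    qed
    have lin: "lincomb2 u v p = (A * zeta p + B * cnj (zeta p)) / 2"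
      unfolding A_def B_def by (rule lincomb2_eq_zeta_cnj)
    have scaled: "c * (cmod (lincomb2 u v p))\<^sup>2 = c / 4 * (cmod (A * zeta p + B * cnj (zeta p)))\<^sup>2"
      unfolding lin by (simp add: norm_divide power_divide)
    show "ln (c * (cmod (lincomb2 u v p))\<^sup>2) = ln (c / 4) + ln ((cmod (A * zeta p + B * cnj (zeta p)))\<^sup>2)"
      unfolding scaled using c nonzero by (intro ln_mult_pos) simp_all
  qed
  have "(\<lambda>p. ln (c * (cmod (lincomb2 u v p))\<^sup>2)) \<in> borel_measurable gauss_plane"
    by measurable
  moreover have "(\<lambda>p. ln (c / 4) + ln ((cmod (A * zeta p + B * cnj (zeta p)))\<^sup>2)) \<in> borel_measurable gauss_plane"
    by (intro borel_measurable_add borel_measurable_const ln_cmod_sq_zeta_cnj_measurable)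
  ultimately have "(\<integral>p. ln (c * (cmod (lincomb2 u v p))\<^sup>2) \<partial>gauss_plane)
      = (\<integral>p. ln (c / 4) + ln ((cmod (A * zeta p + B * cnj (zeta p)))\<^sup>2) \<partial>gauss_plane)"
    using ae by (rule integral_cong_AE)
  also have "\<dots> = ln (c / 4) + ln (Z + sqrt (Z\<^sup>2 - (cmod (u\<^sup>2 + v\<^sup>2))\<^sup>2)) + (LINT \<rho>:{0<..}|lborel. exp (- \<rho>) * ln \<rho>)"
    using integral_ln_cmod_sq_zeta_cnj[OF AB] by (simp add: max gauss_plane.prob_space)
  finally show ?thesis .
qed

lemma ln_add_sqrt_diff_sq:
  fixes Z P :: real
  assumes "0 < Z" "0 \<le> P" "P < Z"
  shows "ln (Z + sqrt (Z\<^sup>2 - P\<^sup>2)) = ln Z + ln (1 + sqrt (1 - (P / Z)\<^sup>2))"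
proof -
  have "Z\<^sup>2 - P\<^sup>2 = Z\<^sup>2 * (1 - (P / Z)\<^sup>2)"
    using assms by (simp add: power_divide right_diff_distrib)
  then have "Z + sqrt (Z\<^sup>2 - P\<^sup>2) = Z * (1 + sqrt (1 - (P / Z)\<^sup>2))"
    using assms by (simp add: real_sqrt_mult distrib_left)
  moreover have "(P / Z)\<^sup>2 \<le> 1"
    using assms by (intro power_le_one) simp_all
  ultimately show ?thesis
    using assms by (simp add: ln_mult_pos add_pos_nonneg)
qed

theorem proposition4p1:
  fixes z :: "complex ^ 'n"
  assumes "CARD('n) \<ge> 2"
    and "z \<noteq> 0"
    and "\<not> in_RP z"
  shows "E_CP z = ln (real CARD('n) / 4)
           + (LINT \<rho>:{0<..}|lborel. exp (- \<rho>) * ln \<rho>)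
           + ln (1 + sqrt (1 - (tau_norm z)\<^sup>2))"
proof -
  define Z where "Z = (norm z)\<^sup>2"
  define P where "P = cmod (\<Sum>i\<in>UNIV. (z $ i)\<^sup>2)"
  have Z: "Z > 0" using assms(2) by (simp add: Z_def)
  have PZ: "P < Z"
    using cmod_sum_sq_less_norm_sq[OF assms(3)] by (simp add: P_def Z_def)
  obtain u v where
    E: "E_CP z = (\<integral>p. ln (real CARD('n) / Z * (cmod (lincomb2 u v p))\<^sup>2) \<partial>gauss_plane)"
    and norms: "(cmod u)\<^sup>2 + (cmod v)\<^sup>2 = Z" and squares: "u\<^sup>2 + v\<^sup>2 = (\<Sum>i\<in>UNIV. (z $ i)\<^sup>2)"
    unfolding Z_def by (rule E_CP_eq_integral_lincomb2)
  have "E_CP z = ln (real CARD('n) / Z / 4) + ln (Z + sqrt (Z\<^sup>2 - P\<^sup>2))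
      + (LINT \<rho>:{0<..}|lborel. exp (- \<rho>) * ln \<rho>)"
    unfolding E P_def squares[symmetric] using Z norms PZ
    by (intro integral_ln_cmod_sq_lincomb2) (simp_all add: P_def squares)
  also have "ln (Z + sqrt (Z\<^sup>2 - P\<^sup>2)) = ln Z + ln (1 + sqrt (1 - (tau_norm z)\<^sup>2))"
    unfolding tau_norm_def P_def[symmetric] Z_def[symmetric] using Z PZ
    by (intro ln_add_sqrt_diff_sq) (simp_all add: P_def)
  also have "ln (real CARD('n) / Z / 4) = ln (real CARD('n) / 4) - ln Z"
    using Z by (simp add: ln_div ln_mult_pos)
  finally show ?thesis by simp
qed

end
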